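(* Let $S_{r,N}$ be an atomic exponential Puiseux semiring. The following are equivalent: (1) $r\in\mathbb{N}$; (2) $S_{r,N}$ is locally tame; (3) $S_{r,N}$ is globally tame.
   Context: $\mathbb{N}=\{0,1,2,\dots\}$. A numerical monoid $N$ is an additive submonoid of $\mathbb{N}$ with finite complement. For $r\in\mathbb{Q}_{>0}$, $S_{r,N}$ is the additive submonoid of $\mathbb{Q}_{\ge0}$ generated by $\{r^k:k\in N\}$. For an atomic monoid $M$ with factorization sets $\mathsf{Z}(y)$ and factorization monoid $\mathsf{Z}(M)$ (free commutative monoid on the atoms), with $\mathsf{d}(z,z')=\max(|z|,|z'|)-|\gcd(z,z')|$: for an atom $a$, the tame degree $\mathsf{t}(a)$ is the smallest $n\in\mathbb{N}\cup\{\infty\}$ such that for every $y\in M$ with $\mathsf{Z}(y)\cap(a+\mathsf{Z}(M))\neq\emptyset$ and every $z\in\mathsf{Z}(y)$ there exists $z'\in\mathsf{Z}(y)\cap(a+\mathsf{Z}(M))$ (a factorization containing $a$) with $\mathsf{d}(z,z')\le n$; $\mathsf{t}(M)=\sup_a\mathsf{t}(a)$. $M$ is locally tame if $\mathsf{t}(a)<\infty$ for every atom $a$, and globally tame if $\mathsf{t}(M)<\infty$. *)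

theory Defs
  imports Complex_Main "HOL-Library.Multiset" "HOL-Library.Extended_Nat"
begin

definition numerical_monoid :: "nat set \<Rightarrow> bool" where
  "numerical_monoid N \<longleftrightarrow> 0 \<in> N \<and> (\<forall>a\<in>N. \<forall>b\<in>N. a + b \<in> N) \<and> finite (UNIV - N)"

inductive_set exp_puiseux :: "rat \<Rightarrow> nat set \<Rightarrow> rat set" for r :: rat and N :: "nat set" where
  zero: "0 \<in> exp_puiseux r N"
| gen: "k \<in> N \<Longrightarrow> r ^ k \<in> exp_puiseux r N"
| add: "x \<in> exp_puiseux r N \<Longrightarrow> y \<in> exp_puiseux r N \<Longrightarrow> x + y \<in> exp_puiseux r N"

text \<open>Atoms of a (reduced) additive submonoid M of the nonnegative rationals
  (its only unit is 0).\<close>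
definition atoms :: "rat set \<Rightarrow> rat set" where
  "atoms M = {a \<in> M. a \<noteq> 0 \<and> (\<forall>b\<in>M. \<forall>c\<in>M. a = b + c \<longrightarrow> b = 0 \<or> c = 0)}"

definition factorizations :: "rat set \<Rightarrow> rat \<Rightarrow> rat multiset set" where
  "factorizations M y = {z. set_mset z \<subseteq> atoms M \<and> sum_mset z = y}"

definition atomic :: "rat set \<Rightarrow> bool" where
  "atomic M \<longleftrightarrow> (\<forall>y\<in>M. y \<noteq> 0 \<longrightarrow> factorizations M y \<noteq> {})"

definition fact_dist :: "rat multiset \<Rightarrow> rat multiset \<Rightarrow> nat" where
  "fact_dist z z' = max (size z) (size z') - size (z \<inter># z')"

text \<open>Tame degree of an atom a (infinity if no finite bound exists).\<close>
definition tame_degree :: "rat set \<Rightarrow> rat \<Rightarrow> enat" where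
  "tame_degree M a = Inf {n :: enat. \<forall>y\<in>M. (\<exists>w\<in>factorizations M y. a \<in># w) \<longrightarrow>
      (\<forall>z\<in>factorizations M y. \<exists>z'\<in>factorizations M y. a \<in># z' \<and> enat (fact_dist z z') \<le> n)}"

definition monoid_tame_degree :: "rat set \<Rightarrow> enat" where
  "monoid_tame_degree M = (SUP a\<in>atoms M. tame_degree M a)"

definition locally_tame :: "rat set \<Rightarrow> bool" where
  "locally_tame M \<longleftrightarrow> (\<forall>a\<in>atoms M. tame_degree M a < \<infinity>)"

definition globally_tame :: "rat set \<Rightarrow> bool" where
  "globally_tame M \<longleftrightarrow> monoid_tame_degree M < \<infinity>"

end

theory Submission
  imports Defs
begin

(* If r is a natural number, 1 = r^0 is the only atom, so factorizations are unique and all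
   tame degrees vanish.  Otherwise write r = p/q in lowest terms.
   If r < 1 and a = r^k is an atom, then p^j copies of a and q^j copies of a factorization of
   r^(k+j) factor the same element, and the atoms of the latter are at most r^j a; a
   factorization containing a has to replace at least r^(-j) of them.
   If r > 1, then 1 and the r^n (n in N, n > 0) are atoms, and p^n copies of 1 and q^n copies
   of r^n factor p^n.  A carry argument in base p/q shows that any sum of powers of r that
   contains 1 and equals a multiple of r^n has at least log2 ((p/q)^(n-1)) terms, so the atom
   1 has infinite tame degree. *)

lemma rat_arch_pow:
  fixes x y :: rat
  assumes "1 < x"
  shows "\<exists>n. y < x ^ n"
proof -
  obtain n where "of_rat y < (of_rat x :: real) ^ n"
    using real_arch_pow[of "of_rat x" "of_rat y"] assms by (auto simp: of_rat_less)
  then have "y < x ^ n" by (simp add: of_rat_power[symmetric] of_rat_less)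
  then show ?thesis ..
qed

lemma rat_eq_nat_fraction:
  assumes "(r::rat) > 0"
  obtains p q :: nat where "r = of_nat p / of_nat q" "0 < q" "0 < p" "coprime p q"
proof -
  obtain P Q where PQ: "quotient_of r = (P, Q)" by (cases "quotient_of r")
  have r: "r = of_int P / of_int Q" and Q: "Q > 0" and cop: "coprime P Q"
    using quotient_of_div[OF PQ] quotient_of_denom_pos[OF PQ] quotient_of_coprime[OF PQ] .
  have P: "P > 0"
  proof (rule ccontr)
    assume "\<not> P > 0"
    then have "of_int P / of_int Q \<le> (0::rat)" using Q by (simp add: divide_nonpos_pos)
    then show False using r assms by simp
  qed
  have "r = of_nat (nat P) / of_nat (nat Q)" using r P Q by simp
  moreover have "coprime (nat P) (nat Q)" using cop P Q
    by (metis coprime_int_iff int_nat_eq less_le)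
  moreover have "0 < nat Q" "0 < nat P" using P Q by simp_all
  ultimately show ?thesis using that by blast
qed

lemma sum_mset_nonneg:
  fixes z :: "'a::ordered_comm_monoid_add multiset"
  shows "\<forall>x\<in>#z. 0 \<le> x \<Longrightarrow> 0 \<le> sum_mset z"
  by (induction z) auto

lemma member_le_sum_mset:
  fixes z :: "'a::ordered_comm_monoid_add multiset"
  assumes "\<forall>x\<in>#z. 0 \<le> x" and "x \<in># z"
  shows "x \<le> sum_mset z"
proof -
  have "sum_mset z = x + sum_mset (z - {#x#})"
    using assms(2) by (metis insert_DiffM sum_mset.add_mset)
  moreover have "0 \<le> sum_mset (z - {#x#})"
    using assms(1) by (intro sum_mset_nonneg) (meson in_diffD)
  ultimately show ?thesis by (simp add: add_increasing2)
qed

lemma sum_mset_le_size_mult: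
  fixes u :: "'a::linordered_semidom multiset"
  assumes "\<forall>x\<in>#u. x \<le> b"
  shows "sum_mset u \<le> of_nat (size u) * b"
  using assms by (induction u) (auto simp: algebra_simps add_mono)

lemma sum_mset_eq_size_mult:
  fixes u :: "'a::semiring_1 multiset"
  assumes "\<forall>x\<in>#u. x = b"
  shows "sum_mset u = of_nat (size u) * b"
  using assms by (induction u) (auto simp: algebra_simps)

lemma sum_mset_repeat_mset:
  fixes f :: "'a::semiring_1 multiset"
  shows "sum_mset (repeat_mset n f) = of_nat n * sum_mset f"
  by (induction n) (auto simp: algebra_simps)

lemma set_mset_repeat_mset_subset: "set_mset (repeat_mset n f) \<subseteq> set_mset f"
  by (metis subsetI count_repeat_mset count_eq_zero_iff mult_0_right)

lemma dvd_sum_mset: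
  fixes f :: "'a \<Rightarrow> 'b::comm_semiring_1"
  shows "(\<And>x. x \<in># A \<Longrightarrow> d dvd f x) \<Longrightarrow> d dvd (\<Sum>x\<in>#A. f x)"
  by (induction A) auto

lemma ex_image_mset:
  assumes "\<forall>x\<in>#A. \<exists>k. x = f k"
  shows "\<exists>K. A = image_mset f K"
  using assms
proof (induction A)
  case (add x A)
  then obtain k K where "x = f k" "A = image_mset f K" by auto
  then have "add_mset x A = image_mset f (add_mset k K)" by simp
  then show ?case ..
qed simp

lemma filter_mset_less_Suc:
  "{#k \<in># K. k < Suc j#} = {#k \<in># K. k < j#} + replicate_mset (count K j) j"
  by (auto simp: multiset_eq_iff)

lemma sum_count_lessThan:
  fixes K :: "nat multiset"
  shows "(\<Sum>i<n. count K i) = size {#k \<in># K. k < n#}"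
  by (induction n) (simp_all add: filter_mset_less_Suc)

subsection \<open>Distance of factorizations and tame degrees\<close>

lemma size_diff_inter_le_fact_dist:
  fixes z z' :: "rat multiset"
  shows "size (z - z \<inter># z') \<le> fact_dist z z'" and "size (z' - z \<inter># z') \<le> fact_dist z z'"
proof -
  have "size (z - z \<inter># z') = size z - size (z \<inter># z')"
    by (metis size_Diff_submset subset_mset.inf.cobounded1)
  moreover have "size (z' - z \<inter># z') = size z' - size (z \<inter># z')"
    by (metis size_Diff_submset subset_mset.inf.cobounded2)
  ultimately show "size (z - z \<inter># z') \<le> fact_dist z z'" "size (z' - z \<inter># z') \<le> fact_dist z z'"
    unfolding fact_dist_def by auto
qed

lemma sum_mset_diff_inter_eq:
  fixes z z' :: "'a::cancel_comm_monoid_add multiset"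
  assumes "sum_mset z = sum_mset z'"
  shows "sum_mset (z - z \<inter># z') = sum_mset (z' - z \<inter># z')"
proof -
  have "sum_mset (z - z \<inter># z') = sum_mset z - sum_mset (z \<inter># z')"
    by (rule sum_mset_diff) simp
  moreover have "sum_mset (z' - z \<inter># z') = sum_mset z' - sum_mset (z \<inter># z')"
    by (rule sum_mset_diff) simp
  ultimately show ?thesis using assms by simp
qed

lemma fact_dist_ge_if_bounded:
  fixes z z' :: "rat multiset"
  assumes "sum_mset z = sum_mset z'" and "\<forall>x\<in>#z'. 0 \<le> x"
    and "\<forall>x\<in>#z. x \<le> e" and "0 \<le> e" and "a \<in># z'" and "a \<notin># z"
  shows "a \<le> of_nat (fact_dist z z') * e"
proof -
  let ?u = "z - z \<inter># z'" and ?u' = "z' - z \<inter># z'"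
  have "a \<in># ?u'" using assms(5,6) by (simp add: in_diff_count not_in_iff)
  then have "a \<le> sum_mset ?u'" using assms(2) by (intro member_le_sum_mset) (auto dest: in_diffD)
  also have "\<dots> = sum_mset ?u" using sum_mset_diff_inter_eq[OF assms(1)] by simp
  also have "\<dots> \<le> of_nat (size ?u) * e" using assms(3) by (intro sum_mset_le_size_mult) (auto dest: in_diffD)
  also have "\<dots> \<le> of_nat (fact_dist z z') * e"
    using size_diff_inter_le_fact_dist(1) assms(4) by (intro mult_right_mono) auto
  finally show ?thesis .
qed

lemma tame_degree_infinite_if_unbounded:
  assumes "\<And>D::nat. \<exists>y\<in>M. (\<exists>w\<in>factorizations M y. a \<in># w) \<and>
     (\<exists>z\<in>factorizations M y. \<forall>z'\<in>factorizations M y. a \<in># z' \<longrightarrow> D < fact_dist z z')"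
  shows "tame_degree M a = \<infinity>"
  unfolding tame_degree_def
proof (rule Inf_eqI)
  fix n :: enat
  assume n: "n \<in> {n. \<forall>y\<in>M. (\<exists>w\<in>factorizations M y. a \<in># w) \<longrightarrow>
      (\<forall>z\<in>factorizations M y. \<exists>z'\<in>factorizations M y. a \<in># z' \<and> enat (fact_dist z z') \<le> n)}"
  show "\<infinity> \<le> n"
  proof (cases n)
    case (enat D)
    from assms[of D] obtain y z where y: "y \<in> M" "\<exists>w\<in>factorizations M y. a \<in># w"
      and z: "z \<in> factorizations M y"
      and far: "\<forall>z'\<in>factorizations M y. a \<in># z' \<longrightarrow> D < fact_dist z z'" by blast
    from n y z obtain z' where "z' \<in> factorizations M y" "a \<in># z'" "enat (fact_dist z z') \<le> n"
      by blast
    with far enat show ?thesis by fastforce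
  qed simp
qed auto

text \<open>Replacing atoms smaller than \<open>e\<close> by a factorization containing \<open>a\<close> costs at least
  \<open>a / e\<close> atoms.\<close>

lemma tame_degree_infinite_if_fine:
  fixes M :: "rat set"
  assumes nonneg: "\<forall>x\<in>M. 0 \<le> x" and "0 < a"
    and fine: "\<And>e. 0 < e \<Longrightarrow> \<exists>y\<in>M. (\<exists>w\<in>factorizations M y. a \<in># w) \<and>
      (\<exists>z\<in>factorizations M y. \<forall>x\<in>#z. x < e)"
  shows "tame_degree M a = \<infinity>"
proof (rule tame_degree_infinite_if_unbounded)
  fix D :: nat
  define e where "e = a / of_nat (Suc D)"
  have "0 < e" and "e \<le> a" using \<open>0 < a\<close> by (simp_all add: e_def divide_le_eq)
  then obtain y z where y: "y \<in> M" "\<exists>w\<in>factorizations M y. a \<in># w"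
    and z: "z \<in> factorizations M y" and small: "\<forall>x\<in>#z. x < e"
    using fine by blast
  have "a \<notin># z" using small \<open>e \<le> a\<close> by force
  have "D < fact_dist z z'" if z': "z' \<in> factorizations M y" "a \<in># z'" for z'
  proof -
    have "a \<le> of_nat (fact_dist z z') * e"
    proof (rule fact_dist_ge_if_bounded)
      show "sum_mset z = sum_mset z'" using z z'(1) unfolding factorizations_def by simp
      show "\<forall>x\<in>#z'. 0 \<le> x" using z'(1) nonneg unfolding factorizations_def atoms_def by blast
    qed (use small \<open>0 < e\<close> z'(2) \<open>a \<notin># z\<close> in \<open>auto intro: less_imp_le\<close>)
    then have "a * of_nat (Suc D) \<le> a * of_nat (fact_dist z z')"
      using \<open>0 < a\<close> by (simp add: e_def field_simps)
    then have "of_nat (Suc D) \<le> (of_nat (fact_dist z z') :: rat)"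
      using \<open>0 < a\<close> by (simp only: mult_le_cancel_left_pos)
    then show ?thesis by simp
  qed
  with y z show "\<exists>y\<in>M. (\<exists>w\<in>factorizations M y. a \<in># w) \<and>
      (\<exists>z\<in>factorizations M y. \<forall>z'\<in>factorizations M y. a \<in># z' \<longrightarrow> D < fact_dist z z')"
    by blast
qed

lemma replicate_mset_in_factorizations:
  "a \<in> atoms M \<Longrightarrow> replicate_mset n a \<in> factorizations M (of_nat n * a)"
  unfolding factorizations_def by auto

lemma repeat_mset_in_factorizations:
  "f \<in> factorizations M y \<Longrightarrow> repeat_mset n f \<in> factorizations M (of_nat n * y)"
  using set_mset_repeat_mset_subset[of n f] unfolding factorizations_def
  by (auto simp: sum_mset_repeat_mset)

lemma globally_tame_imp_locally_tame: "globally_tame M \<Longrightarrow> locally_tame M"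
  unfolding globally_tame_def locally_tame_def monoid_tame_degree_def
  by (meson SUP_upper le_less_trans)

lemma numerical_monoid_zero: "numerical_monoid N \<Longrightarrow> 0 \<in> N"
  unfolding numerical_monoid_def by simp

lemma numerical_monoid_cofinite:
  assumes "numerical_monoid N"
  obtains B where "\<forall>k\<ge>B. k \<in> N"
proof -
  have "finite (UNIV - N)" using assms unfolding numerical_monoid_def by simp
  then obtain m where "\<forall>k\<in>UNIV - N. k \<le> m" by (auto simp: finite_nat_set_iff_bounded_le)
  then have "\<forall>k\<ge>Suc m. k \<in> N" by (metis DiffI UNIV_I not_less_eq_eq)
  then show ?thesis using that by blast
qed

lemma exp_puiseux_nonneg:
  assumes "r > 0" and "x \<in> exp_puiseux r N"
  shows "0 \<le> x"
  using assms(2) by induction (use assms(1) in auto)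

lemma one_in_exp_puiseux: "0 \<in> N \<Longrightarrow> 1 \<in> exp_puiseux r N"
  using exp_puiseux.gen[of 0 N r] by simp

lemma sum_mset_in_exp_puiseux:
  "set_mset w \<subseteq> exp_puiseux r N \<Longrightarrow> sum_mset w \<in> exp_puiseux r N"
  by (induction w) (auto intro: exp_puiseux.intros)

lemma mem_exp_puiseux_if_factorization:
  "w \<in> factorizations (exp_puiseux r N) y \<Longrightarrow> y \<in> exp_puiseux r N"
  using sum_mset_in_exp_puiseux[of w r N] unfolding factorizations_def atoms_def by auto

lemma factorization_nonneg:
  "r > 0 \<Longrightarrow> w \<in> factorizations (exp_puiseux r N) y \<Longrightarrow> \<forall>x\<in>#w. 0 \<le> x"
  using exp_puiseux_nonneg unfolding factorizations_def atoms_def by blast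

lemma exp_puiseux_cases:
  assumes "x \<in> exp_puiseux r N"
  shows "x = 0 \<or> (\<exists>k\<in>N. x = r ^ k) \<or>
    (\<exists>b\<in>exp_puiseux r N. \<exists>c\<in>exp_puiseux r N. b \<noteq> 0 \<and> c \<noteq> 0 \<and> x = b + c)"
  using assms
proof induction
  case (add x y)
  show ?case
  proof (cases "x = 0 \<or> y = 0")
    case True
    then show ?thesis using add.IH by (elim disjE) simp_all
  next
    case False
    then show ?thesis using add.hyps by blast
  qed
qed auto

lemma atom_exp_puiseux_eq_power:
  "a \<in> atoms (exp_puiseux r N) \<Longrightarrow> \<exists>k\<in>N. a = r ^ k"
  using exp_puiseux_cases[of a r N] unfolding atoms_def by blast

lemma atoms_exp_puiseux_nonempty:
  assumes "0 \<in> N" and "atomic (exp_puiseux r N)"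
  shows "atoms (exp_puiseux r N) \<noteq> {}"
proof -
  obtain f where "f \<in> factorizations (exp_puiseux r N) 1"
    using assms one_in_exp_puiseux unfolding atomic_def by fastforce
  moreover from this have "f \<noteq> {#}" unfolding factorizations_def by auto
  ultimately show ?thesis unfolding factorizations_def by auto
qed

subsection \<open>Integral ratio\<close>

lemma atoms_exp_puiseux_Nats:
  assumes "r \<in> \<nat>" and "0 \<in> N" and "a \<in> atoms (exp_puiseux r N)"
  shows "a = 1"
proof -
  let ?S = "exp_puiseux r N"
  have one: "1 \<in> ?S" using one_in_exp_puiseux[OF assms(2)] .
  have of_nat_in: "of_nat t \<in> ?S" for t
    by (induction t) (auto intro: exp_puiseux.intros one simp: add.commute)
  obtain k where "a = r ^ k" using atom_exp_puiseux_eq_power[OF assms(3)] by blast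
  with assms(1) obtain t where t: "a = of_nat t" by (metis Nats_cases of_nat_power)
  have "a \<noteq> 0" and indecomposable: "\<forall>b\<in>?S. \<forall>c\<in>?S. a = b + c \<longrightarrow> b = 0 \<or> c = 0"
    using assms(3) unfolding atoms_def by auto
  show "a = 1"
  proof (rule ccontr)
    assume "a \<noteq> 1"
    with \<open>a \<noteq> 0\<close> t have "t \<ge> 2" by (cases t) auto
    then have "a = 1 + of_nat (t - 1)" and "of_nat (t - 1) \<noteq> (0::rat)"
      using t by (simp_all add: of_nat_diff)
    then show False using indecomposable one of_nat_in[of "t - 1"] by force
  qed
qed

lemma globally_tame_exp_puiseux_Nats:
  assumes "r \<in> \<nat>" and "0 \<in> N"
  shows "globally_tame (exp_puiseux r N)"
proof -
  let ?S = "exp_puiseux r N"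
  have all_one: "\<forall>x\<in>#w. x = 1" if "w \<in> factorizations ?S y" for w y
    using that atoms_exp_puiseux_Nats[OF assms] unfolding factorizations_def by auto
  have "tame_degree ?S a \<le> 0" if a: "a \<in> atoms ?S" for a
    unfolding tame_degree_def
  proof (rule Inf_lower, simp only: mem_Collect_eq, intro ballI impI)
    fix y z
    assume "\<exists>w\<in>factorizations ?S y. a \<in># w" and z: "z \<in> factorizations ?S y"
    then obtain w where w: "w \<in> factorizations ?S y" "a \<in># w" by blast
    have "y = of_nat (size w)"
      using w(1) sum_mset_eq_size_mult[OF all_one[OF w(1)]] unfolding factorizations_def by simp
    with w(2) have "y \<noteq> 0" by auto
    with z obtain x where "x \<in># z" unfolding factorizations_def by fastforce
    then have "a \<in># z" using all_one[OF z] atoms_exp_puiseux_Nats[OF assms a] by auto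
    then show "\<exists>z'\<in>factorizations ?S y. a \<in># z' \<and> enat (fact_dist z z') \<le> 0"
      using z by (intro bexI[of _ z]) (simp_all add: fact_dist_def zero_enat_def)
  qed
  then have "monoid_tame_degree ?S \<le> 0"
    unfolding monoid_tame_degree_def by (intro SUP_least) blast
  then show ?thesis unfolding globally_tame_def
    by (metis enat_ord_code(4) order_le_less_trans zero_enat_def)
qed

subsection \<open>Ratio below one\<close>

lemma tame_degree_exp_puiseux_less_one:
  assumes "0 < r" and "r < 1" and "numerical_monoid N" and "atomic (exp_puiseux r N)"
    and a: "a \<in> atoms (exp_puiseux r N)"
  shows "tame_degree (exp_puiseux r N) a = \<infinity>"
proof (rule tame_degree_infinite_if_fine)
  let ?S = "exp_puiseux r N"
  obtain k where k: "a = r ^ k" using atom_exp_puiseux_eq_power[OF a] by blast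
  show "\<forall>x\<in>?S. 0 \<le> x" using exp_puiseux_nonneg[OF assms(1)] by blast
  show "0 < a" using k assms(1) by simp
  fix e :: rat assume "0 < e"
  obtain p q :: nat where r: "r = of_nat p / of_nat q" and "0 < q" "0 < p"
    using rat_eq_nat_fraction[OF assms(1)] by blast
  obtain B where B: "\<forall>k\<ge>B. k \<in> N" using numerical_monoid_cofinite[OF assms(3)] by blast
  obtain j0 where j0: "1/e < (1/r) ^ j0" using rat_arch_pow[of "1/r"] assms(1,2) by auto
  define m where "m = max j0 (max k B)"
  have "k \<le> m" and "m \<in> N" using B unfolding m_def by auto
  have "r ^ m \<le> r ^ j0" using assms(1,2) unfolding m_def by (intro power_decreasing) auto
  also have "r ^ j0 < e" using j0 assms(1) \<open>0 < e\<close> by (simp add: power_one_over field_simps)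
  finally have "r ^ m < e" .
  have "r ^ m \<noteq> 0" using assms(1) by simp
  then obtain f where f: "f \<in> factorizations ?S (r ^ m)"
    using assms(4) exp_puiseux.gen[OF \<open>m \<in> N\<close>] unfolding atomic_def by blast
  have f_le: "\<forall>x\<in>#f. x \<le> r ^ m"
    using member_le_sum_mset[OF factorization_nonneg[OF assms(1) f]] f
    unfolding factorizations_def by auto
  define j where "j = m - k"
  have "of_nat (p ^ j) * a = of_nat (q ^ j) * r ^ m"
  proof -
    have "(of_nat q :: rat) ^ j * r ^ j = of_nat p ^ j"
      using r \<open>0 < q\<close> by (simp add: power_divide)
    moreover have "m = k + j" using \<open>k \<le> m\<close> unfolding j_def by simp
    ultimately show ?thesis unfolding k by (simp add: power_add algebra_simps)
  qed
  then have w: "replicate_mset (p ^ j) a \<in> factorizations ?S (of_nat (q ^ j) * r ^ m)"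
    using replicate_mset_in_factorizations[OF a] by metis
  have z: "repeat_mset (q ^ j) f \<in> factorizations ?S (of_nat (q ^ j) * r ^ m)"
    using repeat_mset_in_factorizations[OF f] .
  have "\<forall>x\<in>#repeat_mset (q ^ j) f. x < e"
    using f_le set_mset_repeat_mset_subset[of "q ^ j" f] \<open>r ^ m < e\<close> by fastforce
  moreover have "a \<in># replicate_mset (p ^ j) a" using \<open>0 < p\<close> by simp
  ultimately show "\<exists>y\<in>?S. (\<exists>w\<in>factorizations ?S y. a \<in># w) \<and>
      (\<exists>z\<in>factorizations ?S y. \<forall>x\<in>#z. x < e)"
    using w z mem_exp_puiseux_if_factorization[OF w] by blast
qed

subsection \<open>Ratio above one\<close>

lemma exp_puiseux_ge_one:
  assumes "1 \<le> r" and "x \<in> exp_puiseux r N" and "x \<noteq> 0"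
  shows "1 \<le> x"
  using assms(2,3)
proof induction
  case (gen k)
  then show ?case using assms(1) by (simp add: one_le_power)
next
  case (add x y)
  have "0 < r" using assms(1) by simp
  then have "0 \<le> x" "0 \<le> y" using add.hyps exp_puiseux_nonneg by auto
  then show ?case using add.IH add.prems by (cases "x = 0") auto
qed simp

lemma one_in_atoms_exp_puiseux:
  assumes "1 \<le> r" and "0 \<in> N"
  shows "1 \<in> atoms (exp_puiseux r N)"
proof -
  have "b = 0 \<or> c = 0" if "b \<in> exp_puiseux r N" "c \<in> exp_puiseux r N" "1 = b + c" for b c
  proof (rule ccontr)
    assume "\<not> (b = 0 \<or> c = 0)"
    then have "1 \<le> b" "1 \<le> c" using exp_puiseux_ge_one[OF assms(1)] that(1,2) by auto
    then show False using that(3) by linarith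
  qed
  then show ?thesis unfolding atoms_def using one_in_exp_puiseux[OF assms(2)] by auto
qed

text \<open>Elements below \<open>r ^ n\<close> only involve the powers \<open>r ^ k\<close> with \<open>k < n\<close>.\<close>

lemma exp_puiseux_less_power_denominator:
  fixes p q :: nat
  assumes r: "r = of_nat p / of_nat q" and "0 < q" and "1 < r"
    and "x \<in> exp_puiseux r N" and "x < r ^ n"
  shows "\<exists>i::int. of_nat q ^ (n - 1) * x = of_int i"
  using assms(4,5)
proof induction
  case zero
  then show ?case by auto
next
  case (gen k)
  then have "k < n" using assms(3) by (simp add: power_strict_increasing_iff)
  then have "(of_nat q :: rat) ^ (n - 1) = of_nat q ^ k * of_nat q ^ (n - 1 - k)"
    by (simp flip: power_add)
  then have "(of_nat q :: rat) ^ (n - 1) * r ^ k = of_int (int (p ^ k * q ^ (n - 1 - k)))"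
    using r \<open>0 < q\<close> by (simp add: power_divide)
  then show ?case by blast
next
  case (add x y)
  have "0 < r" using assms(3) by simp
  then have "0 \<le> x" "0 \<le> y" using add.hyps exp_puiseux_nonneg by auto
  with add.prems obtain i j where "of_nat q ^ (n - 1) * x = of_int i" "of_nat q ^ (n - 1) * y = of_int j"
    using add.IH by fastforce
  then have "of_nat q ^ (n - 1) * (x + y) = of_int (i + j)" by (simp add: algebra_simps)
  then show ?case by blast
qed

lemma power_in_atoms_exp_puiseux:
  fixes p q :: nat
  assumes r: "r = of_nat p / of_nat q" and "1 < q" and "coprime p q" and "1 < r"
    and "n \<in> N" and "1 \<le> n"
  shows "r ^ n \<in> atoms (exp_puiseux r N)"
proof -
  let ?S = "exp_puiseux r N"
  have "b = 0 \<or> c = 0" if b: "b \<in> ?S" and c: "c \<in> ?S" and bc: "r ^ n = b + c" for b c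
  proof (rule ccontr)
    assume "\<not> (b = 0 \<or> c = 0)"
    then have "b < r ^ n" "c < r ^ n"
      using bc exp_puiseux_nonneg[of r b N] exp_puiseux_nonneg[of r c N] assms(4) b c by auto
    moreover have "0 < q" using assms(2) by simp
    ultimately obtain i j where "of_nat q ^ (n - 1) * b = of_int i" "of_nat q ^ (n - 1) * c = of_int j"
      using exp_puiseux_less_power_denominator[OF r _ assms(4)] b c by metis
    then have "of_nat q ^ (n - 1) * r ^ n = of_int (i + j)" using bc by (simp add: algebra_simps)
    moreover have "(of_nat q :: rat) ^ (n - 1) * r ^ n = of_nat (p ^ n) / of_nat q"
    proof -
      have "(of_nat q :: rat) ^ n = of_nat q ^ (n - 1) * of_nat q" using \<open>1 \<le> n\<close>
        by (simp flip: power_Suc2)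
      then show ?thesis using r assms(2) by (simp add: power_divide)
    qed
    ultimately have "of_nat (p ^ n) = (of_int (i + j) * of_nat q :: rat)"
      using assms(2) by (simp add: field_simps)
    then have "int (p ^ n) = (i + j) * int q"
      by (metis of_int_eq_iff of_int_mult of_int_of_nat_eq)
    then have "q dvd p ^ n" by (metis dvd_triv_right int_dvd_int_iff)
    moreover have "coprime q (p ^ n)" using assms(3) by (simp add: coprime_commute)
    ultimately have "is_unit q" using coprime_common_divisor[of q "p ^ n" q] by simp
    then show False using assms(2) by simp
  qed
  moreover have "r ^ n \<noteq> 0" using assms(4) by simp
  ultimately show ?thesis unfolding atoms_def using exp_puiseux.gen[OF assms(5)] by blast
qed

text \<open>Divisibility gives \<open>p ^ j \<le> b j\<close>, hence \<open>b (j + 1) \<le> (q + m j) * b j \<le> q * 2 ^ m j * b j\<close>: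
  the digits \<open>m j\<close> must make up for the gap between \<open>q ^ n\<close> and \<open>p ^ n\<close>.\<close>

lemma carry_sequence_bound:
  fixes p q n :: nat and b m :: "nat \<Rightarrow> nat"
  assumes "0 < p" and "0 < q" and b_0: "b 0 = 0" and b_Suc: "\<And>j. b (Suc j) = q * b j + m j * p ^ j"
    and "0 < m 0" and dvd: "\<And>j. 1 \<le> j \<Longrightarrow> j \<le> n \<Longrightarrow> p ^ j dvd b j" and "1 \<le> n"
  shows "p ^ n \<le> p * q ^ (n - 1) * 2 ^ (\<Sum>i<n. m i)"
proof -
  have pos: "0 < b j" if "1 \<le> j" for j
    using that
  proof (induction j rule: dec_induct)
    case base
    then show ?case using b_Suc[of 0] b_0 \<open>0 < m 0\<close> by simp
  next
    case (step j)
    then show ?case using b_Suc[of j] \<open>0 < q\<close> by simp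
  qed
  have power_le: "p ^ j \<le> b j" if "1 \<le> j" "j \<le> n" for j
    using dvd[OF that] pos[OF that(1)] by (simp add: dvd_imp_le)
  have "b j \<le> p * q ^ (j - 1) * 2 ^ (\<Sum>i<j. m i)" if "1 \<le> j" "j \<le> n" for j
    using that
  proof (induction j rule: dec_induct)
    case base
    have "m 0 \<le> 2 ^ m 0" by (simp add: less_imp_le)
    also have "\<dots> \<le> p * 2 ^ m 0" using \<open>0 < p\<close> by simp
    finally show ?case using b_Suc[of 0] b_0 by simp
  next
    case (step j)
    have "b (Suc j) = q * b j + m j * p ^ j" by (rule b_Suc)
    also have "\<dots> \<le> (q + m j) * b j"
      using power_le[of j] step by (simp add: algebra_simps)
    also have "\<dots> \<le> q * 2 ^ m j * b j"
    proof -
      have "q + m j \<le> q * (1 + m j)" using \<open>0 < q\<close> by (simp add: algebra_simps)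
      also have "\<dots> \<le> q * 2 ^ m j" using less_exp[of "m j"] by (intro mult_le_mono2) (simp add: Suc_leI)
      finally show ?thesis by simp
    qed
    also have "\<dots> \<le> q * 2 ^ m j * (p * q ^ (j - 1) * 2 ^ (\<Sum>i<j. m i))"
      using step by simp
    also have "\<dots> = p * q ^ (Suc j - 1) * 2 ^ (\<Sum>i<Suc j. m i)"
      using step(1) by (simp add: power_add algebra_simps flip: power_Suc)
    finally show ?case .
  qed
  with power_le[of n] \<open>1 \<le> n\<close> show ?thesis by (meson order.refl order_trans)
qed

lemma sum_power_ratio_clear_denominators:
  fixes p q n c M :: nat and K :: "nat multiset"
  assumes "0 < q" and "n \<le> M" and le_M: "\<forall>k\<in>#K. k \<le> M"
    and sum_eq: "(\<Sum>k\<in>#K. (of_nat p / of_nat q :: rat) ^ k) = of_nat c * (of_nat p / of_nat q) ^ n"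
  shows "(\<Sum>k\<in>#K. p ^ k * q ^ (M - k)) = c * p ^ n * q ^ (M - n)"
proof -
  have "(of_nat (\<Sum>k\<in>#K. p ^ k * q ^ (M - k)) :: rat) = (\<Sum>k\<in>#K. of_nat (p ^ k * q ^ (M - k)))"
    by (simp add: multiset.map_comp comp_def)
  also have "\<dots> = (\<Sum>k\<in>#K. (of_nat p / of_nat q) ^ k * of_nat q ^ M)"
  proof (intro arg_cong[where f = sum_mset] image_mset_cong)
    fix k assume "k \<in># K"
    then have "(of_nat q :: rat) ^ M = of_nat q ^ k * of_nat q ^ (M - k)"
      using le_M by (simp flip: power_add)
    then show "of_nat (p ^ k * q ^ (M - k)) = (of_nat p / of_nat q :: rat) ^ k * of_nat q ^ M"
      using \<open>0 < q\<close> by (simp add: power_divide)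
  qed
  also have "\<dots> = of_nat c * (of_nat p / of_nat q) ^ n * of_nat q ^ M"
    using sum_eq by (simp flip: sum_mset_distrib_right)
  also have "\<dots> = of_nat (c * p ^ n * q ^ (M - n))"
  proof -
    have "(of_nat q :: rat) ^ M = of_nat q ^ n * of_nat q ^ (M - n)"
      using \<open>n \<le> M\<close> by (simp flip: power_add)
    then show ?thesis using \<open>0 < q\<close> by (simp add: power_divide)
  qed
  finally show ?thesis by (simp only: of_nat_eq_iff)
qed

definition carry_value :: "nat \<Rightarrow> nat \<Rightarrow> nat multiset \<Rightarrow> nat \<Rightarrow> nat" where
  "carry_value p q K j = (\<Sum>k\<in>#{#k \<in># K. k < j#}. p ^ k * q ^ (j - 1 - k))"

lemma carry_value_0: "carry_value p q K 0 = 0"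
  by (simp add: carry_value_def)

lemma carry_value_Suc: "carry_value p q K (Suc j) = q * carry_value p q K j + count K j * p ^ j"
proof -
  have "(\<Sum>k\<in>#{#k \<in># K. k < j#}. p ^ k * q ^ (Suc j - 1 - k))
      = (\<Sum>k\<in>#{#k \<in># K. k < j#}. q * (p ^ k * q ^ (j - 1 - k)))"
    by (intro arg_cong[where f = sum_mset] image_mset_cong) (simp add: Suc_diff_Suc flip: power_Suc)
  then show ?thesis
    unfolding carry_value_def filter_mset_less_Suc by (simp add: sum_mset_distrib_left)
qed

lemma power_dvd_carry_value:
  fixes p q n c M :: nat and K :: "nat multiset"
  assumes "coprime p q" and "j \<le> n" and "n \<le> M" and "\<forall>k\<in>#K. k \<le> M"
    and cleared: "(\<Sum>k\<in>#K. p ^ k * q ^ (M - k)) = c * p ^ n * q ^ (M - n)"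
  shows "p ^ j dvd carry_value p q K j"
proof -
  let ?f = "\<lambda>k. p ^ k * q ^ (M - k)"
  have "(\<Sum>k\<in>#{#k \<in># K. k < j#}. ?f k) = q ^ (M - j + 1) * carry_value p q K j"
    unfolding carry_value_def sum_mset_distrib_left
  proof (intro arg_cong[where f = sum_mset] image_mset_cong)
    fix k assume "k \<in># {#k \<in># K. k < j#}"
    then have "M - k = (M - j + 1) + (j - 1 - k)" using assms(2,3) by auto
    then have "q ^ (M - k) = q ^ (M - j + 1) * q ^ (j - 1 - k)" by (simp only: power_add)
    then show "?f k = q ^ (M - j + 1) * (p ^ k * q ^ (j - 1 - k))" by (simp add: ac_simps)
  qed
  moreover have high: "p ^ j dvd (\<Sum>k\<in>#{#k \<in># K. \<not> k < j#}. ?f k)"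
    by (intro dvd_sum_mset) (simp add: le_imp_power_dvd dvd_mult2)
  moreover have "(\<Sum>k\<in>#K. ?f k) = (\<Sum>k\<in>#{#k \<in># K. k < j#}. ?f k) + (\<Sum>k\<in>#{#k \<in># K. \<not> k < j#}. ?f k)"
    by (simp only: sum_mset.union[symmetric] image_mset_union[symmetric] multiset_partition[symmetric])
  moreover have "p ^ j dvd (\<Sum>k\<in>#K. ?f k)"
    unfolding cleared by (intro dvd_mult2 dvd_mult le_imp_power_dvd assms(2))
  ultimately have "p ^ j dvd q ^ (M - j + 1) * carry_value p q K j"
    using dvd_add_left_iff[OF high] by simp
  then show ?thesis using \<open>coprime p q\<close> by (simp add: coprime_dvd_mult_right_iff)
qed

lemma power_ratio_sum_bound:
  fixes p q n c :: nat and K :: "nat multiset"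
  assumes "q < p" and "0 < q" and "coprime p q" and "0 \<in># K" and "1 \<le> n"
    and sum_eq: "(\<Sum>k\<in>#K. (of_nat p / of_nat q :: rat) ^ k) = of_nat c * (of_nat p / of_nat q) ^ n"
  shows "p ^ (n - 1) \<le> q ^ (n - 1) * 2 ^ size K"
proof -
  define M where "M = n + sum_mset K"
  have "n \<le> M" and le_M: "\<forall>k\<in>#K. k \<le> M"
    using member_le_sum_mset[of K] unfolding M_def by (auto intro: trans_le_add2)
  have "p ^ j dvd carry_value p q K j" if "j \<le> n" for j
    using power_dvd_carry_value[OF \<open>coprime p q\<close> that \<open>n \<le> M\<close> le_M]
      sum_power_ratio_clear_denominators[OF \<open>0 < q\<close> \<open>n \<le> M\<close> le_M sum_eq] by blast
  then have "p ^ n \<le> p * q ^ (n - 1) * 2 ^ (\<Sum>i<n. count K i)"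
    using carry_sequence_bound[of p q "carry_value p q K" "count K" n] assms
    by (simp add: carry_value_0 carry_value_Suc)
  also have "\<dots> \<le> p * q ^ (n - 1) * 2 ^ size K"
    by (simp add: sum_count_lessThan)
  finally have "p * p ^ (n - 1) \<le> p * (q ^ (n - 1) * 2 ^ size K)"
    using \<open>1 \<le> n\<close> by (simp add: mult.assoc flip: power_Suc)
  then show ?thesis using \<open>q < p\<close> by simp
qed

lemma fact_dist_power_block:
  fixes p q n c :: nat and z' :: "rat multiset"
  assumes r: "r = of_nat p / of_nat q" and "q < p" and "0 < q" and "coprime p q" and "1 \<le> n"
    and powers: "\<forall>x\<in>#z'. \<exists>k. x = r ^ k" and "1 \<in># z'" and sum_eq: "sum_mset z' = of_nat c * r ^ n"
  shows "p ^ (n - 1) \<le> q ^ (n - 1) * 2 ^ fact_dist (replicate_mset c (r ^ n)) z'"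
proof -
  define z where "z = replicate_mset c (r ^ n)"
  let ?u = "z - z \<inter># z'" and ?u' = "z' - z \<inter># z'"
  have "1 < r" using r \<open>q < p\<close> \<open>0 < q\<close> by simp
  then have "1 < r ^ n" using \<open>1 \<le> n\<close> by (intro one_less_power) auto
  then have "r ^ n \<noteq> 1" by simp
  then have "1 \<in># ?u'" using \<open>1 \<in># z'\<close> by (simp add: z_def in_diff_count not_in_iff)
  have "sum_mset ?u' = sum_mset ?u"
    using sum_mset_diff_inter_eq[of z z'] sum_eq by (simp add: z_def)
  also have "\<dots> = of_nat (size ?u) * r ^ n"
  proof (rule sum_mset_eq_size_mult, rule ballI)
    fix x assume "x \<in># ?u"
    then have "x \<in># z" by (rule in_diffD)
    then show "x = r ^ n" by (simp add: z_def split: if_splits)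
  qed
  finally have sum_u': "sum_mset ?u' = of_nat (size ?u) * r ^ n" .
  obtain K where K: "?u' = image_mset (\<lambda>k. r ^ k) K"
    using ex_image_mset[of ?u' "\<lambda>k. r ^ k"] powers by (auto dest: in_diffD)
  have "0 \<in># K"
  proof -
    obtain k where "k \<in># K" "r ^ k = 1" using \<open>1 \<in># ?u'\<close> K by auto
    then show ?thesis using \<open>1 < r\<close> by (metis one_less_power not_gr0 less_irrefl)
  qed
  moreover have "(\<Sum>k\<in>#K. (of_nat p / of_nat q :: rat) ^ k) = of_nat (size ?u) * (of_nat p / of_nat q) ^ n"
    using sum_u' K r by simp
  ultimately have "p ^ (n - 1) \<le> q ^ (n - 1) * 2 ^ size K"
    using power_ratio_sum_bound assms(2-5) by blast
  also have "size K = size ?u'" using K by simp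
  also have "\<dots> \<le> fact_dist z z'" by (rule size_diff_inter_le_fact_dist(2))
  finally show ?thesis unfolding z_def by simp
qed

lemma ex_power_gap:
  fixes p q c :: nat
  assumes "0 < q" and "q < p"
  shows "\<exists>n\<ge>B. q ^ n * c < p ^ n"
proof -
  let ?x = "of_nat p / of_nat q :: rat"
  obtain m where "of_nat c < ?x ^ m" using rat_arch_pow[of ?x] assms by auto
  moreover have "?x ^ m \<le> ?x ^ max m B" using assms by (intro power_increasing) auto
  ultimately have "of_nat c < ?x ^ max m B" by simp
  then have "of_nat c * of_nat q ^ max m B < (of_nat p ^ max m B :: rat)"
    using assms(1) by (simp add: power_divide pos_less_divide_eq)
  then have "q ^ max m B * c < p ^ max m B"
    by (metis (mono_tags) mult.commute of_nat_less_iff of_nat_mult of_nat_power)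
  then show ?thesis by (intro exI[of _ "max m B"]) simp
qed

lemma tame_degree_one_exp_puiseux_greater_one:
  assumes "1 < r" and "r \<notin> \<nat>" and "numerical_monoid N"
  shows "tame_degree (exp_puiseux r N) 1 = \<infinity>"
proof (rule tame_degree_infinite_if_unbounded)
  let ?S = "exp_puiseux r N"
  fix D :: nat
  obtain p q :: nat where r: "r = of_nat p / of_nat q" and "0 < q" "0 < p" "coprime p q"
    using rat_eq_nat_fraction[of r] assms(1) by auto
  have "q \<noteq> 1" using r assms(2) by auto
  with \<open>0 < q\<close> have "1 < q" by simp
  have "q < p" using r assms(1) \<open>0 < q\<close> by (simp add: less_divide_eq)
  obtain B where B: "\<forall>k\<ge>B. k \<in> N" using numerical_monoid_cofinite[OF assms(3)] by blast
  obtain n' where "B \<le> n'" and large: "q ^ n' * 2 ^ D < p ^ n'"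
    using ex_power_gap[OF \<open>0 < q\<close> \<open>q < p\<close>] by blast
  define n where "n = Suc n'"
  have "1 \<le> n" and "n \<in> N" and "n - 1 = n'" using B \<open>B \<le> n'\<close> unfolding n_def by auto
  define y where "y = (of_nat (p ^ n) :: rat)"
  define w where "w = replicate_mset (p ^ n) (1::rat)"
  define z where "z = replicate_mset (q ^ n) (r ^ n)"
  have rn: "of_nat (q ^ n) * r ^ n = y" using r \<open>0 < q\<close> by (simp add: y_def power_divide)
  have "1 \<in> atoms ?S"
    using one_in_atoms_exp_puiseux numerical_monoid_zero[OF assms(3)] assms(1) by simp
  then have w: "w \<in> factorizations ?S y"
    using replicate_mset_in_factorizations[of 1 ?S "p ^ n"] unfolding w_def y_def by simp
  have z: "z \<in> factorizations ?S y"
    using replicate_mset_in_factorizations[of "r ^ n" ?S "q ^ n"] rn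
      power_in_atoms_exp_puiseux[OF r \<open>1 < q\<close> \<open>coprime p q\<close> assms(1) \<open>n \<in> N\<close> \<open>1 \<le> n\<close>]
    unfolding z_def by simp
  show "\<exists>y\<in>?S. (\<exists>w\<in>factorizations ?S y. 1 \<in># w) \<and>
      (\<exists>z\<in>factorizations ?S y. \<forall>z'\<in>factorizations ?S y. 1 \<in># z' \<longrightarrow> D < fact_dist z z')"
  proof (intro bexI conjI ballI impI)
    fix z' assume z': "z' \<in> factorizations ?S y" "1 \<in># z'"
    have "\<forall>x\<in>#z'. \<exists>k. x = r ^ k"
      using z'(1) atom_exp_puiseux_eq_power unfolding factorizations_def by blast
    moreover have "sum_mset z' = of_nat (q ^ n) * r ^ n" using z'(1) rn unfolding factorizations_def by simp
    ultimately have "p ^ (n - 1) \<le> q ^ (n - 1) * 2 ^ fact_dist z z'"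
      unfolding z_def using fact_dist_power_block r \<open>q < p\<close> \<open>0 < q\<close> \<open>coprime p q\<close> \<open>1 \<le> n\<close> z'(2)
      by blast
    with large \<open>n - 1 = n'\<close> have "2 ^ D < (2::nat) ^ fact_dist z z'"
      by (meson le_less_trans mult_less_cancel1 not_less)
    then show "D < fact_dist z z'" by simp
  qed (use w z mem_exp_puiseux_if_factorization[OF w] \<open>0 < p\<close> in \<open>auto simp: w_def\<close>)
qed

lemma not_locally_tame_exp_puiseux:
  assumes "0 < r" and "r \<notin> \<nat>" and "numerical_monoid N" and "atomic (exp_puiseux r N)"
  shows "\<not> locally_tame (exp_puiseux r N)"
proof -
  have "\<exists>a\<in>atoms (exp_puiseux r N). tame_degree (exp_puiseux r N) a = \<infinity>"
  proof (cases "r < 1")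
    case True
    then show ?thesis
      using tame_degree_exp_puiseux_less_one[OF assms(1) True assms(3,4)]
        atoms_exp_puiseux_nonempty[OF numerical_monoid_zero[OF assms(3)] assms(4)] by blast
  next
    case False
    with assms(2) have "1 < r" by (metis Nats_1 linorder_neqE_linordered_idom)
    then show ?thesis
      using tame_degree_one_exp_puiseux_greater_one[OF _ assms(2,3)]
        one_in_atoms_exp_puiseux[OF _ numerical_monoid_zero[OF assms(3)]] by fastforce
  qed
  then show ?thesis unfolding locally_tame_def by auto
qed

theorem mainTheorem16:
  fixes r :: rat and N :: "nat set"
  assumes "r > 0" and "numerical_monoid N" and "atomic (exp_puiseux r N)"
  shows "(r \<in> \<nat> \<longleftrightarrow> locally_tame (exp_puiseux r N))
       \<and> (locally_tame (exp_puiseux r N) \<longleftrightarrow> globally_tame (exp_puiseux r N))"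
proof (cases "r \<in> \<nat>")
  case True
  then have "globally_tame (exp_puiseux r N)"
    using globally_tame_exp_puiseux_Nats numerical_monoid_zero[OF assms(2)] by blast
  then show ?thesis using True globally_tame_imp_locally_tame by blast
next
  case False
  then have "\<not> locally_tame (exp_puiseux r N)"
    using not_locally_tame_exp_puiseux assms by blast
  then show ?thesis using False globally_tame_imp_locally_tame by blast
qed

end
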